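(* Let $I\subsetneq\Bbbk[x_0,\dots,x_n]$ be a proper saturated Borel ideal. Then there exists $j\in\mathbb{N}$ such that $P_{\lambda(I)}=\sigma^j\lambda(P_I)$.
   Context: $\Bbbk$ is an algebraically closed field; $P_J$ is the Hilbert polynomial of the quotient of the ambient polynomial ring by $J$. A monomial ideal $I$ is Borel if for every monomial $m\in I$, every $x_j\mid m$ and every $i<j$, $mx_i/x_j\in I$; it is saturated if $(I:\langle x_0,\dots,x_n\rangle^\infty)=I$. The extension of $I$ is $\lambda(I):=I\cdot\Bbbk[x_0,\dots,x_{n+1}]$. Binomial coefficients are polynomials: $\binom{t+a}{b}=\frac{(t+a)\cdots(t+a-b+1)}{b!}$ for $b\ge0$, $0$ for $b<0$. An admissible Hilbert polynomial (Hilbert polynomial of a nonempty closed subscheme of a projective space) has a unique Gotzmann expression $P(t)=\sum_{j=1}^r\binom{t+b_j-(j-1)}{b_j}$, $b_1\ge\dots\ge b_r\ge0$; $\lambda(P)$ is the admissible polynomial $\sum_{j=1}^r\binom{t+b_j+1-(j-1)}{b_j+1}$, and $\sigma(P):=1+P$. *)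

theory Defs
  imports "HOL-Computational_Algebra.Polynomial"
begin

text \<open>Monomials of k[x_0,...,x_n] are exponent vectors u :: nat => nat with u i = 0 for i > n.
  A monomial ideal is identified with the set of monomials it contains (these form a
  K-basis of the ideal); the quotient S/I then has as K-basis the monomials not in I.\<close>

definition mons :: "nat \<Rightarrow> (nat \<Rightarrow> nat) set" where
  "mons n = {u. \<forall>i>n. u i = 0}"

definition mdeg :: "nat \<Rightarrow> (nat \<Rightarrow> nat) \<Rightarrow> nat" where
  "mdeg n u = (\<Sum>i\<le>n. u i)"

definition mono_ideal :: "nat \<Rightarrow> (nat \<Rightarrow> nat) set \<Rightarrow> bool" where
  "mono_ideal n I \<longleftrightarrow> I \<subseteq> mons n \<and>
     (\<forall>u\<in>I. \<forall>v\<in>mons n. (\<forall>i. u i \<le> v i) \<longrightarrow> v \<in> I)"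

definition borel :: "nat \<Rightarrow> (nat \<Rightarrow> nat) set \<Rightarrow> bool" where
  "borel n I \<longleftrightarrow> (\<forall>u\<in>I. \<forall>i j. i < j \<and> j \<le> n \<and> 0 < u j \<longrightarrow>
      u(i := u i + 1, j := u j - 1) \<in> I)"

text \<open>Saturation (I : m^\<infinity>) = union over k of (I : m^k); a monomial u lies in (I : m^k)
  iff u*v \<in> I for every monomial v of degree k.\<close>
definition saturation :: "nat \<Rightarrow> (nat \<Rightarrow> nat) set \<Rightarrow> (nat \<Rightarrow> nat) set" where
  "saturation n I = {u \<in> mons n. \<exists>k. \<forall>v\<in>mons n. mdeg n v = k \<longrightarrow> (\<lambda>i. u i + v i) \<in> I}"

definition saturated :: "nat \<Rightarrow> (nat \<Rightarrow> nat) set \<Rightarrow> bool" where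
  "saturated n I \<longleftrightarrow> saturation n I = I"

definition proper_ideal :: "nat \<Rightarrow> (nat \<Rightarrow> nat) set \<Rightarrow> bool" where
  "proper_ideal n I \<longleftrightarrow> I \<noteq> mons n"

definition ext_ideal :: "nat \<Rightarrow> (nat \<Rightarrow> nat) set \<Rightarrow> (nat \<Rightarrow> nat) set" where
  "ext_ideal n I = {u \<in> mons (Suc n). \<exists>v\<in>I. \<forall>i. v i \<le> u i}"

definition hilb_fun :: "nat \<Rightarrow> (nat \<Rightarrow> nat) set \<Rightarrow> nat \<Rightarrow> nat" where
  "hilb_fun n I t = card {u \<in> mons n. mdeg n u = t \<and> u \<notin> I}"

definition hilb_poly :: "nat \<Rightarrow> (nat \<Rightarrow> nat) set \<Rightarrow> rat poly" where
  "hilb_poly n I = (THE p. \<forall>\<^sub>F t in sequentially. poly p (of_nat t) = of_nat (hilb_fun n I t))"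

text \<open>Binomial coefficient as polynomial in t: binom(t+a, b) = (t+a)...(t+a-b+1)/b!.\<close>
definition binom_poly :: "int \<Rightarrow> nat \<Rightarrow> rat poly" where
  "binom_poly a b = smult (1 / fact b) (\<Prod>i<b. [:of_int a - of_nat i, 1:])"

text \<open>Gotzmann expression P = sum_{j=1}^r binom(t + b_j - (j-1), b_j), b_1 \<ge> ... \<ge> b_r \<ge> 0
  (list index 0-based, so index j below corresponds to j+1 in the paper).\<close>
definition gotzmann :: "rat poly \<Rightarrow> nat list \<Rightarrow> bool" where
  "gotzmann P bs \<longleftrightarrow> sorted_wrt (\<ge>) bs \<and>
     P = (\<Sum>j<length bs. binom_poly (int (bs ! j) - int j) (bs ! j))"

definition lam_poly :: "rat poly \<Rightarrow> rat poly" where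
  "lam_poly P = (let bs = (THE bs. gotzmann P bs) in
     (\<Sum>j<length bs. binom_poly (int (bs ! j) + 1 - int j) (bs ! j + 1)))"

definition sigma_poly :: "rat poly \<Rightarrow> rat poly" where
  "sigma_poly P = 1 + P"

end

(* For a saturated Borel ideal I the variable x_n is a nonzerodivisor modulo I, and x_{n+1} is one
   modulo lambda(I).  Since setting x_{n+1} = 0 in lambda(I) gives back I, the Hilbert function of
   lambda(I) is the running sum of H_I.  Running sums turn the Gotzmann function G of [b_1,...,b_r]
   into that of [b_1+1,...,b_r+1], and the finitely many defects H_I(s) - G(s), s < r, add up to a
   constant j: the contribution of j trailing zeros, i.e. of sigma^j.

   That H_I has a Gotzmann expression with nonnegative defects vanishing from degree r - 1 on is
   shown by induction on the number of variables, passing from I to the saturation K of its section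
   by x_n = 0.  The running-sum argument then applies again, now with the extra defects H_J - H_K of
   the unsaturated section J; they are positive exactly in the degrees from r up to the degree where
   J and K start to agree, which is controlled by keeping track that K is generated in degrees <= r. *)

theory Submission
  imports Defs
begin

section \<open>Gotzmann expressions\<close>

lemma poly_binom_poly: "poly (binom_poly a b) x = (x + of_int a) gchoose b"
  unfolding binom_poly_def gbinomial_prod_rev
  by (simp add: poly_prod atLeast0LessThan algebra_simps)

lemma poly_binom_poly_of_nat:
  assumes "0 \<le> int t + a"
  shows "poly (binom_poly a b) (of_nat t) = of_nat (nat (int t + a) choose b)"
proof -
  have "(of_nat (nat (int t + a)) :: rat) = of_nat t + of_int a"
    using assms by (metis of_int_of_nat_eq of_int_add of_nat_nat)
  then show ?thesis by (simp add: poly_binom_poly binomial_gbinomial)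
qed

lemma binom_poly_0 [simp]: "binom_poly a 0 = 1"
  by (simp add: binom_poly_def)

lemma degree_binom_poly: "degree (binom_poly a b) = b"
  and coeff_binom_poly_degree: "coeff (binom_poly a b) b = 1 / fact b"
proof -
  define Q where "Q = (\<Prod>i<b. [:of_int a - of_nat i, 1:] :: rat poly)"
  have "degree Q = b"
    unfolding Q_def by (simp add: degree_prod_eq_sum_degree)
  moreover have "lead_coeff Q = 1"
    unfolding Q_def by (simp add: lead_coeff_prod)
  moreover have "binom_poly a b = smult (1 / fact b) Q"
    unfolding binom_poly_def Q_def by simp
  ultimately show "degree (binom_poly a b) = b" "coeff (binom_poly a b) b = 1 / fact b"
    by simp_all
qed

lemma coeff_binom_poly_nonneg: "c \<le> b \<Longrightarrow> 0 \<le> coeff (binom_poly a c) b"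
  by (cases "c = b") (simp_all add: coeff_binom_poly_degree coeff_eq_0 degree_binom_poly)

definition gotzmann_poly :: "nat list \<Rightarrow> rat poly" where
  "gotzmann_poly bs = (\<Sum>j<length bs. binom_poly (int (bs ! j) - int j) (bs ! j))"

lemma gotzmann_iff: "gotzmann P bs \<longleftrightarrow> sorted_wrt (\<ge>) bs \<and> P = gotzmann_poly bs"
  unfolding gotzmann_def gotzmann_poly_def ..

lemma gotzmann_poly_Cons:
  "gotzmann_poly (b # bs) =
     binom_poly (int b) b + (\<Sum>j<length bs. binom_poly (int (bs ! j) - int (Suc j)) (bs ! j))"
  unfolding gotzmann_poly_def by (simp add: sum.lessThan_Suc_shift del: sum.lessThan_Suc)

lemma poly_gotzmann_poly_Cons:
  "poly (gotzmann_poly (b # bs)) x = poly (binom_poly (int b) b) x + poly (gotzmann_poly bs) (x - 1)"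
proof -
  have "poly (binom_poly (int c - int (Suc j)) c) x = poly (binom_poly (int c - int j) c) (x - 1)"
    for c j
    by (simp add: poly_binom_poly algebra_simps)
  then show ?thesis
    unfolding gotzmann_poly_Cons by (simp add: gotzmann_poly_def poly_sum)
qed

lemma gotzmann_poly_Cons_degree:
  assumes "\<forall>c\<in>set bs. c \<le> b"
  shows "degree (gotzmann_poly (b # bs)) \<le> b" and "0 < coeff (gotzmann_poly (b # bs)) b"
proof -
  have le: "(b # bs) ! j \<le> b" if "j < length (b # bs)" for j
    using that assms by (cases j) auto
  show "degree (gotzmann_poly (b # bs)) \<le> b"
    unfolding gotzmann_poly_def
    by (intro degree_sum_le) (auto simp: degree_binom_poly le)
  have "0 \<le> (\<Sum>j<length bs. coeff (binom_poly (int (bs ! j) - int (Suc j)) (bs ! j)) b)"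
    using assms by (intro sum_nonneg coeff_binom_poly_nonneg) auto
  moreover have "0 < coeff (binom_poly (int b) b) b"
    by (simp add: coeff_binom_poly_degree)
  ultimately show "0 < coeff (gotzmann_poly (b # bs)) b"
    by (simp add: gotzmann_poly_Cons coeff_sum)
qed


lemma gotzmann_poly_Nil [simp]: "gotzmann_poly [] = 0"
  by (simp add: gotzmann_poly_def)

lemma gotzmann_poly_eq_0_iff:
  assumes "sorted_wrt (\<ge>) bs"
  shows "gotzmann_poly bs = 0 \<longleftrightarrow> bs = []"
proof (cases bs)
  case (Cons b bs')
  then have "0 < coeff (gotzmann_poly bs) b"
    using assms gotzmann_poly_Cons_degree(2) by simp
  then show ?thesis using Cons by auto
qed simp

text \<open>A decreasing Gotzmann expression is determined by its polynomial: its first entry is the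
  degree, and removing the first summand leaves the rest of the expression shifted by one.\<close>

lemma gotzmann_poly_inj:
  "sorted_wrt (\<ge>) bs \<Longrightarrow> sorted_wrt (\<ge>) bs' \<Longrightarrow>
    gotzmann_poly bs = gotzmann_poly bs' \<Longrightarrow> bs = bs'"
proof (induction bs arbitrary: bs')
  case Nil
  then show ?case using gotzmann_poly_eq_0_iff by simp
next
  case (Cons b bs)
  then obtain b' bs'' where bs': "bs' = b' # bs''"
    using gotzmann_poly_eq_0_iff by (cases bs') auto
  have eq: "gotzmann_poly (b # bs) = gotzmann_poly (b' # bs'')"
    using Cons.prems bs' by simp
  have "b' \<le> degree (gotzmann_poly (b # bs))"
    using eq gotzmann_poly_Cons_degree(2)[of bs'' b'] Cons.prems(2) bs' by (simp add: le_degree)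
  moreover have "b \<le> degree (gotzmann_poly (b' # bs''))"
    using eq gotzmann_poly_Cons_degree(2)[of bs b] Cons.prems(1) by (simp add: le_degree)
  ultimately have "b = b'"
    using gotzmann_poly_Cons_degree(1)[of bs b] gotzmann_poly_Cons_degree(1)[of bs'' b']
      Cons.prems bs' by simp
  have "poly (gotzmann_poly bs) ((x + 1) - 1) = poly (gotzmann_poly bs'') ((x + 1) - 1)" for x
    using arg_cong[OF eq, of "\<lambda>p. poly p (x + 1)"] \<open>b = b'\<close>
    by (simp only: poly_gotzmann_poly_Cons)
  then have "gotzmann_poly bs = gotzmann_poly bs''"
    by (simp add: poly_eq_poly_eq_iff[symmetric] fun_eq_iff)
  then show ?case
    using Cons.IH[of bs''] Cons.prems bs' \<open>b = b'\<close> by simp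
qed

lemma lam_poly_gotzmann_poly:
  assumes "sorted_wrt (\<ge>) bs"
  shows "lam_poly (gotzmann_poly bs) = gotzmann_poly (map Suc bs)"
proof -
  have "(THE bs'. gotzmann (gotzmann_poly bs) bs') = bs"
    using assms gotzmann_poly_inj by (intro the_equality) (auto simp: gotzmann_iff)
  then show ?thesis
    unfolding lam_poly_def gotzmann_poly_def Let_def by (simp add: algebra_simps)
qed

lemma gotzmann_poly_snoc:
  "gotzmann_poly (bs @ [b]) = gotzmann_poly bs + binom_poly (int b - int (length bs)) b"
  unfolding gotzmann_poly_def by (simp add: nth_append)

lemma gotzmann_poly_append_zeros:
  "gotzmann_poly (bs @ replicate c 0) = of_nat c + gotzmann_poly bs"
  by (induction c) (simp_all add: replicate_append_same[symmetric] gotzmann_poly_snoc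
      flip: append_assoc)

lemma sigma_poly_funpow: "(sigma_poly ^^ j) p = of_nat j + p"
  by (induction j) (simp_all add: sigma_poly_def)

definition gotzmann_hilb :: "nat list \<Rightarrow> nat \<Rightarrow> nat" where
  "gotzmann_hilb bs t = (\<Sum>j<length bs. if j \<le> t then (t - j + bs ! j) choose (bs ! j) else 0)"

lemma poly_gotzmann_poly_of_nat:
  assumes "length bs \<le> Suc t"
  shows "poly (gotzmann_poly bs) (of_nat t) = of_nat (gotzmann_hilb bs t)"
proof -
  have "nat (int t + (int (bs ! j) - int j)) = t - j + bs ! j" if "j < length bs" for j
    using that assms by simp
  then show ?thesis
    using assms unfolding gotzmann_poly_def gotzmann_hilb_def poly_sum of_nat_sum
    by (intro sum.cong) (simp_all add: poly_binom_poly_of_nat)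
qed

lemma sum_gotzmann_hilb: "(\<Sum>s\<le>t. gotzmann_hilb bs s) = gotzmann_hilb (map Suc bs) t"
proof -
  have "(\<Sum>s\<le>t. if j \<le> s then (s - j + b) choose b else 0) =
        (if j \<le> t then (t - j + Suc b) choose Suc b else 0)" for j b
    by (induction t) (auto simp: Suc_diff_le le_Suc_eq)
  then show ?thesis
    unfolding gotzmann_hilb_def by (subst sum.swap) (auto intro!: sum.cong)
qed

lemma gotzmann_hilb_snoc:
  "gotzmann_hilb (bs @ [b]) t =
     gotzmann_hilb bs t + (if length bs \<le> t then (t - length bs + b) choose b else 0)"
  unfolding gotzmann_hilb_def by (auto simp: nth_append intro!: sum.cong)

lemma gotzmann_hilb_append_zeros:
  "gotzmann_hilb (bs @ replicate c 0) t = gotzmann_hilb bs t + min c (Suc t - length bs)"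
  by (induction c) (auto simp: replicate_append_same[symmetric] gotzmann_hilb_snoc
      simp flip: append_assoc)

text \<open>The running sum of \<open>f = G + d\<close> is the Gotzmann function of \<open>map Suc bs\<close> plus the
  accumulated defects \<open>d\<close>; these grow by at least one per degree from \<open>length bs\<close> on and are
  constant from \<open>T\<close> on, exactly like the contribution of \<open>c\<close> trailing zeros.\<close>

lemma running_sum_gotzmann_hilb:
  fixes f :: "nat \<Rightarrow> nat"
  assumes le: "\<And>s. gotzmann_hilb bs s \<le> f s"
    and gap: "\<And>s. length bs \<le> s \<Longrightarrow> s < T \<Longrightarrow> gotzmann_hilb bs s < f s"
    and eq: "\<And>s. T \<le> s \<Longrightarrow> f s = gotzmann_hilb bs s"
  defines "c \<equiv> \<Sum>s<T. f s - gotzmann_hilb bs s"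
  shows "T \<le> length bs + c"
    and "gotzmann_hilb (map Suc bs @ replicate c 0) t \<le> (\<Sum>s\<le>t. f s)"
    and "length bs + c \<le> Suc t \<Longrightarrow> (\<Sum>s\<le>t. f s) = gotzmann_hilb (map Suc bs @ replicate c 0) t"
proof -
  define d where "d s = f s - gotzmann_hilb bs s" for s
  have lift: "gotzmann_hilb (map Suc bs @ replicate c 0) t =
      (\<Sum>s\<le>t. gotzmann_hilb bs s) + min c (Suc t - length bs)" for t
    by (simp add: gotzmann_hilb_append_zeros sum_gotzmann_hilb)
  have sum_f: "(\<Sum>s\<le>t. f s) = (\<Sum>s\<le>t. gotzmann_hilb bs s) + (\<Sum>s\<le>t. d s)" for t
    using le by (simp add: d_def sum.distrib[symmetric])
  have late: "(\<Sum>s\<le>t. d s) = c" if "T \<le> Suc t" for t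
    unfolding c_def d_def[symmetric]
    by (rule sum.mono_neutral_right) (use that eq in \<open>auto simp: d_def\<close>)
  have early: "min T (Suc t) - length bs \<le> (\<Sum>s\<le>t. d s)" for t
  proof -
    have "min T (Suc t) - length bs = (\<Sum>s\<in>{length bs..<min T (Suc t)}. 1)"
      by simp
    also have "\<dots> \<le> (\<Sum>s\<in>{length bs..<min T (Suc t)}. d s)"
      using gap by (intro sum_mono) (simp add: d_def Suc_le_eq)
    also have "\<dots> \<le> (\<Sum>s\<le>t. d s)"
      by (intro sum_mono2) auto
    finally show ?thesis .
  qed
  show T: "T \<le> length bs + c"
    using early[of T] late[of T] by simp
  show "gotzmann_hilb (map Suc bs @ replicate c 0) t \<le> (\<Sum>s\<le>t. f s)"
    using early[of t] late[of t] unfolding lift sum_f by (cases "T \<le> Suc t") auto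
  show "(\<Sum>s\<le>t. f s) = gotzmann_hilb (map Suc bs @ replicate c 0) t"
    if "length bs + c \<le> Suc t"
    using that T late[of t] unfolding lift sum_f by simp
qed

lemma hilb_poly_eqI:
  assumes "\<And>t. T \<le> t \<Longrightarrow> poly p (of_nat t) = of_nat (hilb_fun n I t)"
  shows "hilb_poly n I = p"
  unfolding hilb_poly_def
proof (rule the_equality)
  show "\<forall>\<^sub>F t in sequentially. poly p (of_nat t) = of_nat (hilb_fun n I t)"
    using assms by (auto simp: eventually_sequentially)
next
  fix q :: "rat poly"
  assume "\<forall>\<^sub>F t in sequentially. poly q (of_nat t) = of_nat (hilb_fun n I t)"
  then obtain T' where T': "\<And>t. T' \<le> t \<Longrightarrow> poly q (of_nat t) = of_nat (hilb_fun n I t)"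
    by (auto simp: eventually_sequentially)
  have "of_nat ` {max T T'..} \<subseteq> {x. poly (q - p) x = 0}"
    using assms T' by auto
  moreover have "infinite (of_nat ` {max T T'..} :: rat set)"
  proof
    assume "finite (of_nat ` {max T T'..} :: rat set)"
    then have "finite {max T T'..}"
      by (rule finite_imageD) (simp add: inj_on_def)
    then show False using infinite_Ici by blast
  qed
  ultimately have "infinite {x. poly (q - p) x = 0}"
    using finite_subset by blast
  then show "q = p"
    using poly_roots_finite[of "q - p"] by auto
qed

lemma hilb_poly_eq_gotzmann_poly:
  assumes "\<And>t. length bs \<le> Suc t \<Longrightarrow> hilb_fun n I t = gotzmann_hilb bs t"
  shows "hilb_poly n I = gotzmann_poly bs"
  by (rule hilb_poly_eqI[of "length bs"]) (simp add: assms poly_gotzmann_poly_of_nat)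

section \<open>Monomials and Hilbert functions\<close>

lemma mons_add: "u \<in> mons n \<Longrightarrow> v \<in> mons n \<Longrightarrow> (\<lambda>i. u i + v i) \<in> mons n"
  by (simp add: mons_def)

lemma mdeg_add: "mdeg n (\<lambda>i. u i + v i) = mdeg n u + mdeg n v"
  by (simp add: mdeg_def sum.distrib)

lemma mdeg_mono: "\<forall>i. u i \<le> v i \<Longrightarrow> mdeg n u \<le> mdeg n v"
  unfolding mdeg_def by (simp add: sum_mono)

lemma le_mdeg: "i \<le> n \<Longrightarrow> u i \<le> mdeg n u"
  unfolding mdeg_def by (rule member_le_sum) auto

lemma mdeg_fun_upd: "i \<le> n \<Longrightarrow> mdeg n (u(i := x)) + u i = mdeg n u + x"
  unfolding mdeg_def by (simp add: sum.remove[of "{..n}" i])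

lemma mdeg_Suc: "mdeg (Suc n) u = mdeg n u + u (Suc n)"
  by (simp add: mdeg_def)

lemma mons_Suc_iff: "u \<in> mons n \<longleftrightarrow> u \<in> mons (Suc n) \<and> u (Suc n) = 0"
proof -
  have "n < i \<longleftrightarrow> i = Suc n \<or> Suc n < i" for i
    by auto
  then show ?thesis
    unfolding mons_def by auto
qed

lemma mdeg_eq_0_iff: "u \<in> mons n \<Longrightarrow> mdeg n u = 0 \<longleftrightarrow> u = (\<lambda>_. 0)"
  by (auto simp: mdeg_def mons_def fun_eq_iff) (metis atMost_iff not_less)

lemma finite_mons_mdeg: "finite {u \<in> mons n. mdeg n u = t}"
proof (rule finite_subset)
  show "{u \<in> mons n. mdeg n u = t} \<subseteq>
      {u. \<forall>i. (i \<in> {..n} \<longrightarrow> u i \<in> {..t}) \<and> (i \<notin> {..n} \<longrightarrow> u i = 0)}"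
    by (auto simp: mons_def le_mdeg)
qed (rule finite_set_of_finite_funs; simp)

lemma exists_divisor_mdeg:
  "v \<in> mons n \<Longrightarrow> d \<le> mdeg n v \<Longrightarrow> \<exists>w\<in>mons n. (\<forall>i. w i \<le> v i) \<and> mdeg n w = d"
proof (induction d)
  case 0
  then show ?case by (intro bexI[of _ "\<lambda>_. 0"]) (simp_all add: mons_def mdeg_def)
next
  case (Suc d)
  then obtain w where w: "w \<in> mons n" "\<forall>i. w i \<le> v i" "mdeg n w = d" by auto
  have "\<exists>i\<le>n. w i < v i"
  proof (rule ccontr)
    assume "\<not> ?thesis"
    then have "mdeg n v \<le> mdeg n w" unfolding mdeg_def by (intro sum_mono) auto
    then show False using Suc.prems w by simp
  qed
  then obtain i where i: "i \<le> n" "w i < v i" by auto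
  have "mdeg n (w(i := Suc (w i))) = Suc d"
    using mdeg_fun_upd[OF i(1), of w "Suc (w i)"] w(3) by simp
  moreover have "w(i := Suc (w i)) \<in> mons n" using w(1) i(1) by (simp add: mons_def)
  moreover have "\<forall>j. (w(i := Suc (w i))) j \<le> v j" using w(2) i(2) by simp
  ultimately show ?case by blast
qed

lemma exists_cofactor:
  assumes "v \<in> mons n" "\<forall>i. w i \<le> v i"
  shows "\<exists>x\<in>mons n. v = (\<lambda>i. w i + x i) \<and> mdeg n v = mdeg n w + mdeg n x"
proof -
  have v: "v = (\<lambda>i. w i + (v i - w i))"
    using assms(2) by (simp add: fun_eq_iff)
  have "(\<lambda>i. v i - w i) \<in> mons n"
    using assms(1) by (simp add: mons_def)
  then show ?thesis
    using v mdeg_add[of n w "\<lambda>i. v i - w i"] by (intro bexI) auto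
qed

lemma mono_idealD: "mono_ideal n I \<Longrightarrow> u \<in> I \<Longrightarrow> v \<in> mons n \<Longrightarrow> \<forall>i. u i \<le> v i \<Longrightarrow> v \<in> I"
  unfolding mono_ideal_def by blast

lemma mono_ideal_subset_mons: "mono_ideal n I \<Longrightarrow> I \<subseteq> mons n"
  unfolding mono_ideal_def by blast

definition std_mons :: "nat \<Rightarrow> (nat \<Rightarrow> nat) set \<Rightarrow> nat \<Rightarrow> (nat \<Rightarrow> nat) set" where
  "std_mons n I t = {u \<in> mons n. mdeg n u = t \<and> u \<notin> I}"

lemma hilb_fun_std_mons: "hilb_fun n I t = card (std_mons n I t)"
  unfolding hilb_fun_def std_mons_def ..

lemma finite_std_mons: "finite (std_mons n I t)"
  by (rule finite_subset[OF _ finite_mons_mdeg[of n t]]) (auto simp: std_mons_def)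

lemma hilb_fun_antimono: "J \<subseteq> K \<Longrightarrow> hilb_fun n K t \<le> hilb_fun n J t"
  unfolding hilb_fun_std_mons by (rule card_mono[OF finite_std_mons[of n J t]]) (auto simp: std_mons_def)

lemma hilb_fun_strict_antimono:
  assumes "J \<subseteq> K" "u \<in> K - J" "u \<in> mons n" "mdeg n u = t"
  shows "hilb_fun n K t < hilb_fun n J t"
  unfolding hilb_fun_std_mons
  by (rule psubset_card_mono[OF finite_std_mons]) (use assms in \<open>auto simp: std_mons_def\<close>)

lemma hilb_fun_eqI:
  assumes "J \<subseteq> K" "\<And>u. u \<in> K \<Longrightarrow> mdeg n u = t \<Longrightarrow> u \<in> J"
  shows "hilb_fun n J t = hilb_fun n K t"
  unfolding hilb_fun_def using assms by (intro arg_cong[where f = card]) blast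

section \<open>Saturation\<close>

definition colon_pow :: "nat \<Rightarrow> (nat \<Rightarrow> nat) set \<Rightarrow> nat \<Rightarrow> (nat \<Rightarrow> nat) set" where
  "colon_pow n J k = {u \<in> mons n. \<forall>v\<in>mons n. mdeg n v = k \<longrightarrow> (\<lambda>i. u i + v i) \<in> J}"

lemma saturation_eq_Union_colon_pow: "saturation n J = (\<Union>k. colon_pow n J k)"
  unfolding saturation_def colon_pow_def by blast

lemma colon_powD:
  assumes J: "mono_ideal n J" and u: "u \<in> colon_pow n J k"
    and z: "z \<in> mons n" "\<forall>i. u i \<le> z i" "mdeg n u + k \<le> mdeg n z"
  shows "z \<in> J"
proof -
  obtain x where x: "x \<in> mons n" "z = (\<lambda>i. u i + x i)" "mdeg n z = mdeg n u + mdeg n x"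
    using exists_cofactor[OF z(1,2)] by blast
  then obtain y where y: "y \<in> mons n" "\<forall>i. y i \<le> x i" "mdeg n y = k"
    using exists_divisor_mdeg[of x n k] z(3) by auto
  have "(\<lambda>i. u i + y i) \<in> J"
    using u y unfolding colon_pow_def by blast
  moreover have "\<forall>i. u i + y i \<le> z i"
    using x(2) y(2) by simp
  ultimately show ?thesis
    using mono_idealD[OF J _ z(1)] by blast
qed

lemma colon_pow_mono:
  assumes J: "mono_ideal n J" and "k \<le> k'"
  shows "colon_pow n J k \<subseteq> colon_pow n J k'"
proof
  fix u assume u: "u \<in> colon_pow n J k"
  then have "u \<in> mons n" by (simp add: colon_pow_def)
  then show "u \<in> colon_pow n J k'"
    using colon_powD[OF J u] assms(2) by (auto simp: colon_pow_def mons_add mdeg_add)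
qed

lemma finite_subset_colon_pow:
  assumes J: "mono_ideal n J" and "finite F" "F \<subseteq> saturation n J"
  shows "\<exists>k. F \<subseteq> colon_pow n J k"
  using assms(2,3)
proof (induction F rule: finite_induct)
  case (insert u F)
  then obtain k k' where "F \<subseteq> colon_pow n J k" "u \<in> colon_pow n J k'"
    by (auto simp: saturation_eq_Union_colon_pow)
  then have "insert u F \<subseteq> colon_pow n J (max k k')"
    using colon_pow_mono[OF J, of k "max k k'"] colon_pow_mono[OF J, of k' "max k k'"] by auto
  then show ?case by blast
qed simp

lemma subset_saturation:
  assumes J: "mono_ideal n J"
  shows "J \<subseteq> saturation n J"
proof -
  have "J \<subseteq> colon_pow n J 0"
    using mono_ideal_subset_mons[OF J] by (auto simp: colon_pow_def mdeg_eq_0_iff)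
  then show ?thesis
    unfolding saturation_eq_Union_colon_pow by blast
qed

lemma mono_ideal_saturation:
  assumes J: "mono_ideal n J"
  shows "mono_ideal n (saturation n J)"
proof -
  have "v \<in> colon_pow n J k" if "u \<in> colon_pow n J k" "v \<in> mons n" "\<forall>i. u i \<le> v i" for u v k
    using colon_powD[OF J that(1)] that(2,3) mdeg_mono[OF that(3)]
    by (auto simp: colon_pow_def mons_add mdeg_add trans_le_add1)
  moreover have "colon_pow n J k \<subseteq> mons n" for k
    by (auto simp: colon_pow_def)
  ultimately show ?thesis
    unfolding mono_ideal_def saturation_eq_Union_colon_pow by blast
qed

lemma borelD:
  "borel n I \<Longrightarrow> u \<in> I \<Longrightarrow> i < j \<Longrightarrow> j \<le> n \<Longrightarrow> 0 < u j \<Longrightarrow>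
    u(i := u i + 1, j := u j - 1) \<in> I"
  unfolding borel_def by blast

lemma borel_colon_pow:
  assumes B: "borel n J"
  shows "borel n (colon_pow n J k)"
  unfolding borel_def
proof (intro ballI allI impI)
  fix u i j assume u: "u \<in> colon_pow n J k" and ij: "i < j \<and> j \<le> n \<and> 0 < u j"
  let ?u = "u(i := u i + 1, j := u j - 1)"
  have "(\<lambda>l. ?u l + v l) \<in> J" if v: "v \<in> mons n" "mdeg n v = k" for v
  proof -
    have "(\<lambda>l. u l + v l) \<in> J" using u v by (simp add: colon_pow_def)
    then have "(\<lambda>l. u l + v l)(i := u i + v i + 1, j := u j + v j - 1) \<in> J"
      using borelD[OF B, of "\<lambda>l. u l + v l" i j] ij by simp
    moreover have "(\<lambda>l. u l + v l)(i := u i + v i + 1, j := u j + v j - 1) = (\<lambda>l. ?u l + v l)"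
      using ij by (auto simp: fun_eq_iff)
    ultimately show ?thesis by simp
  qed
  moreover have "?u \<in> mons n" using u ij by (auto simp: colon_pow_def mons_def)
  ultimately show "?u \<in> colon_pow n J k" by (simp add: colon_pow_def)
qed

lemma borel_saturation:
  assumes "borel n J"
  shows "borel n (saturation n J)"
  unfolding borel_def saturation_eq_Union_colon_pow
  using borelD[OF borel_colon_pow[OF assms]] by blast

lemma saturated_saturation:
  assumes J: "mono_ideal n J"
  shows "saturated n (saturation n J)"
proof -
  have "u \<in> saturation n J" if u: "u \<in> colon_pow n (saturation n J) k" for u k
  proof -
    define F where "F = (\<lambda>v i. u i + v i) ` {v \<in> mons n. mdeg n v = k}"
    have "finite F" "F \<subseteq> saturation n J"
      using u finite_mons_mdeg by (auto simp: F_def colon_pow_def)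
    then obtain K where K: "F \<subseteq> colon_pow n J K"
      using finite_subset_colon_pow[OF J] by blast
    have um: "u \<in> mons n" using u by (simp add: colon_pow_def)
    have "(\<lambda>i. u i + w i) \<in> J" if w: "w \<in> mons n" "mdeg n w = k + K" for w
    proof -
      obtain v where v: "v \<in> mons n" "\<forall>i. v i \<le> w i" "mdeg n v = k"
        using exists_divisor_mdeg[OF w(1), of k] w(2) by auto
      have "(\<lambda>i. u i + v i) \<in> colon_pow n J K"
        using K v by (auto simp: F_def)
      then show ?thesis
        by (rule colon_powD[OF J]) (use um v w in \<open>auto simp: mons_add mdeg_add\<close>)
    qed
    then have "u \<in> colon_pow n J (k + K)"
      using um by (simp add: colon_pow_def)
    then show ?thesis
      unfolding saturation_eq_Union_colon_pow by blast
  qed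
  then have "saturation n (saturation n J) \<subseteq> saturation n J"
    unfolding saturation_eq_Union_colon_pow[of n "saturation n J"] by blast
  then show ?thesis
    unfolding saturated_def using subset_saturation[OF mono_ideal_saturation[OF J]] by blast
qed

definition var_nonzerodivisor :: "nat \<Rightarrow> (nat \<Rightarrow> nat) set \<Rightarrow> bool" where
  "var_nonzerodivisor k I \<longleftrightarrow> (\<forall>u\<in>I. 0 < u k \<longrightarrow> u(k := u k - 1) \<in> I)"

text \<open>If \<open>u\<close> is divisible by \<open>x\<^sub>n\<close>, then every \<open>x\<^sub>i \<cdot> u / x\<^sub>n\<close> lies in \<open>I\<close> by the
  Borel property, so \<open>u / x\<^sub>n \<in> (I : m) \<subseteq> I\<close> by saturation.\<close>

lemma var_nonzerodivisor_saturated_borel: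
  assumes I: "mono_ideal n I" and B: "borel n I" and S: "saturated n I"
  shows "var_nonzerodivisor n I"
  unfolding var_nonzerodivisor_def
proof (intro ballI impI)
  fix u assume u: "u \<in> I" and pos: "0 < u n"
  let ?w = "u(n := u n - 1)"
  have wm: "?w \<in> mons n"
    using u mono_ideal_subset_mons[OF I] by (auto simp: mons_def)
  have "(\<lambda>l. ?w l + v l) \<in> I" if v: "v \<in> mons n" "mdeg n v = 1" for v
  proof -
    have "v \<noteq> (\<lambda>_. 0)"
      using mdeg_eq_0_iff[OF v(1)] v(2) by simp
    then obtain i where vi: "0 < v i"
      by (auto simp: fun_eq_iff)
    have i: "i \<le> n"
      by (rule ccontr) (use v(1) vi in \<open>simp add: mons_def\<close>)
    define m where "m = (if i = n then u else u(i := u i + 1, n := u n - 1))"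
    have "m \<in> I"
    proof (cases "i = n")
      case False
      then show ?thesis
        using borelD[OF B u _ _ pos, of i] i by (simp add: m_def)
    qed (simp add: m_def u)
    moreover have "\<forall>l. m l \<le> ?w l + v l"
      using vi pos by (cases "i = n") (simp_all add: m_def)
    ultimately show ?thesis
      using mono_idealD[OF I _ mons_add[OF wm v(1)]] by blast
  qed
  then have "?w \<in> colon_pow n I 1"
    using wm by (simp add: colon_pow_def)
  then show "?w \<in> I"
    using S unfolding saturated_def saturation_eq_Union_colon_pow by blast
qed

section \<open>Hyperplane sections\<close>

text \<open>The image of \<open>I\<close> under \<open>x\<^bsub>n+1\<^esub> \<mapsto> 0\<close>, an ideal of \<open>k[x\<^sub>0,\<dots>,x\<^sub>n]\<close>.\<close>

definition hyperplane_section :: "nat \<Rightarrow> (nat \<Rightarrow> nat) set \<Rightarrow> (nat \<Rightarrow> nat) set" where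
  "hyperplane_section n I = {u \<in> I. u (Suc n) = 0}"

lemma mono_ideal_hyperplane_section:
  assumes "mono_ideal (Suc n) I"
  shows "mono_ideal n (hyperplane_section n I)"
  unfolding mono_ideal_def
proof (intro conjI ballI impI)
  show "hyperplane_section n I \<subseteq> mons n"
    using mono_ideal_subset_mons[OF assms] by (auto simp: hyperplane_section_def mons_Suc_iff[of _ n])
  fix u v assume "u \<in> hyperplane_section n I" "v \<in> mons n" "\<forall>i. u i \<le> v i"
  then show "v \<in> hyperplane_section n I"
    using mono_idealD[OF assms, of u v] by (auto simp: hyperplane_section_def mons_Suc_iff[of _ n])
qed

lemma borel_hyperplane_section:
  assumes "borel (Suc n) I"
  shows "borel n (hyperplane_section n I)"
  unfolding borel_def hyperplane_section_def using borelD[OF assms] by auto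

lemma hilb_fun_Suc_split:
  "hilb_fun (Suc n) I t =
     hilb_fun n (hyperplane_section n I) t + card {u \<in> std_mons (Suc n) I t. 0 < u (Suc n)}"
proof -
  have "std_mons n (hyperplane_section n I) t = {u \<in> std_mons (Suc n) I t. u (Suc n) = 0}"
    by (auto simp: std_mons_def hyperplane_section_def mdeg_Suc mons_Suc_iff[of _ n])
  moreover have "card (std_mons (Suc n) I t) =
      card {u \<in> std_mons (Suc n) I t. u (Suc n) = 0} + card {u \<in> std_mons (Suc n) I t. 0 < u (Suc n)}"
    by (subst card_Un_disjoint[symmetric]) (auto intro!: arg_cong[where f = card] finite_std_mons)
  ultimately show ?thesis
    unfolding hilb_fun_std_mons by simp
qed

lemma card_std_mons_divisible:
  assumes I: "mono_ideal (Suc n) I" and nzd: "var_nonzerodivisor (Suc n) I"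
  shows "card {u \<in> std_mons (Suc n) I (Suc t). 0 < u (Suc n)} = hilb_fun (Suc n) I t"
proof -
  define mul where "mul u = u(Suc n := Suc (u (Suc n)))" for u :: "nat \<Rightarrow> nat"
  define quot where "quot u = u(Suc n := u (Suc n) - 1)" for u :: "nat \<Rightarrow> nat"
  have mdeg_mul: "mdeg (Suc n) (mul u) = Suc (mdeg (Suc n) u)" for u
    using mdeg_fun_upd[of "Suc n" "Suc n" u "Suc (u (Suc n))"] by (simp add: mul_def)
  have mdeg_quot: "0 < u (Suc n) \<Longrightarrow> Suc (mdeg (Suc n) (quot u)) = mdeg (Suc n) u" for u
    using mdeg_fun_upd[of "Suc n" "Suc n" u "u (Suc n) - 1"] by (simp add: quot_def)
  have "mul ` std_mons (Suc n) I t \<subseteq> {u \<in> std_mons (Suc n) I (Suc t). 0 < u (Suc n)}"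
  proof (rule image_subsetI)
    fix u assume u: "u \<in> std_mons (Suc n) I t"
    have "quot (mul u) = u" by (simp add: mul_def quot_def)
    then have "mul u \<notin> I"
      using nzd u by (auto simp: var_nonzerodivisor_def std_mons_def quot_def mul_def)
    moreover have "mul u \<in> mons (Suc n)" "0 < mul u (Suc n)"
      using u by (auto simp: std_mons_def mul_def mons_def)
    ultimately show "mul u \<in> {v \<in> std_mons (Suc n) I (Suc t). 0 < v (Suc n)}"
      using u mdeg_mul[of u] by (simp add: std_mons_def)
  qed
  moreover have "quot ` {u \<in> std_mons (Suc n) I (Suc t). 0 < u (Suc n)} \<subseteq> std_mons (Suc n) I t"
  proof clarify
    fix u assume u: "u \<in> std_mons (Suc n) I (Suc t)" "0 < u (Suc n)"
    have "\<forall>i. quot u i \<le> u i"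
      by (simp add: quot_def)
    then have "quot u \<notin> I"
      using mono_idealD[OF I, of "quot u" u] u by (auto simp: std_mons_def)
    then show "quot u \<in> std_mons (Suc n) I t"
      using u mdeg_quot[of u] by (auto simp: std_mons_def quot_def mons_def)
  qed
  ultimately have "bij_betw mul (std_mons (Suc n) I t) {u \<in> std_mons (Suc n) I (Suc t). 0 < u (Suc n)}"
    by (intro bij_betw_byWitness[where f' = quot]) (auto simp: mul_def quot_def)
  then show ?thesis
    unfolding hilb_fun_std_mons by (simp add: bij_betw_same_card)
qed

lemma hilb_fun_cumulative:
  assumes "mono_ideal (Suc n) I" "var_nonzerodivisor (Suc n) I"
  shows "hilb_fun (Suc n) I t = (\<Sum>s\<le>t. hilb_fun n (hyperplane_section n I) s)"
proof (induction t)
  case 0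
  have "u (Suc n) = 0" if "u \<in> std_mons (Suc n) I 0" for u
    using that le_mdeg[of "Suc n" "Suc n" u] by (simp add: std_mons_def)
  then show ?case
    using hilb_fun_Suc_split[of n I 0] by (simp add: card_eq_0_iff)
next
  case (Suc t)
  then show ?case
    using hilb_fun_Suc_split[of n I "Suc t"] card_std_mons_divisible[OF assms] by simp
qed

lemma mono_ideal_ext_ideal: "mono_ideal (Suc n) (ext_ideal n I)"
  unfolding mono_ideal_def ext_ideal_def by (blast intro: le_trans)

lemma var_nonzerodivisor_ext_ideal:
  assumes "I \<subseteq> mons n"
  shows "var_nonzerodivisor (Suc n) (ext_ideal n I)"
  unfolding var_nonzerodivisor_def
proof (intro ballI impI)
  fix u assume "u \<in> ext_ideal n I"
  then obtain v where v: "v \<in> I" "\<forall>i. v i \<le> u i" and u: "u \<in> mons (Suc n)"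
    by (auto simp: ext_ideal_def)
  have "v (Suc n) = 0"
    using v(1) assms by (auto simp: mons_def)
  then have "\<forall>i. v i \<le> (u(Suc n := u (Suc n) - 1)) i"
    using v(2) by simp
  moreover have "u(Suc n := u (Suc n) - 1) \<in> mons (Suc n)"
    using u by (simp add: mons_def)
  ultimately show "u(Suc n := u (Suc n) - 1) \<in> ext_ideal n I"
    unfolding ext_ideal_def using v(1) by blast
qed

lemma hyperplane_section_ext_ideal:
  assumes I: "mono_ideal n I"
  shows "hyperplane_section n (ext_ideal n I) = I"
proof
  show "hyperplane_section n (ext_ideal n I) \<subseteq> I"
    using mono_idealD[OF I] by (auto simp: hyperplane_section_def ext_ideal_def mons_Suc_iff[of _ n])
  show "I \<subseteq> hyperplane_section n (ext_ideal n I)"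
    using mono_ideal_subset_mons[OF I] by (auto simp: hyperplane_section_def ext_ideal_def mons_Suc_iff[of _ n])
qed

section \<open>Gotzmann regularity of saturated Borel ideals\<close>

definition generated_in_deg_le :: "nat \<Rightarrow> nat \<Rightarrow> (nat \<Rightarrow> nat) set \<Rightarrow> bool" where
  "generated_in_deg_le n r I \<longleftrightarrow>
     (\<forall>u\<in>I. r < mdeg n u \<longrightarrow> (\<exists>i\<le>n. 0 < u i \<and> u(i := u i - 1) \<in> I))"

lemma generated_in_deg_le_divisor:
  assumes gen: "generated_in_deg_le n r K"
  shows "u \<in> K \<Longrightarrow> r \<le> d \<Longrightarrow> d \<le> mdeg n u \<Longrightarrow> \<exists>w\<in>K. (\<forall>i. w i \<le> u i) \<and> mdeg n w = d"
proof (induction "mdeg n u - d" arbitrary: u)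
  case 0
  then show ?case by (intro bexI[of _ u]) auto
next
  case (Suc k)
  then have "r < mdeg n u"
    by linarith
  then obtain i where i: "i \<le> n" "0 < u i" "u(i := u i - 1) \<in> K"
    using gen Suc.prems(1) unfolding generated_in_deg_le_def by blast
  define u' where "u' = u(i := u i - 1)"
  have "Suc (mdeg n u') = mdeg n u"
    using mdeg_fun_upd[OF i(1), of u "u i - 1"] i(2) by (simp add: u'_def)
  then have "k = mdeg n u' - d" "d \<le> mdeg n u'"
    using Suc.hyps(2) by linarith+
  then obtain w where w: "w \<in> K" "\<forall>j. w j \<le> u' j" "mdeg n w = d"
    using Suc.hyps(1)[of u'] Suc.prems(2) i(3) by (auto simp: u'_def)
  moreover have "\<forall>j. w j \<le> u j"
    using w(2) by (metis le_trans u'_def diff_le_self fun_upd_apply order_refl)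
  ultimately show ?case
    by blast
qed

text \<open>The generators of \<open>J\<^sup>s\<^sup>a\<^sup>t\<close> of degree \<open>r\<close> all lie in one \<open>(J : m\<^sup>k)\<close>, so
  \<open>J\<close> and \<open>J\<^sup>s\<^sup>a\<^sup>t\<close> agree from degree \<open>r + k\<close> on; \<open>T\<close> is the least degree \<open>\<ge> r\<close> from
  which they agree.\<close>

lemma saturation_gap:
  assumes J: "mono_ideal n J" and gen: "generated_in_deg_le n r (saturation n J)"
  obtains T where "r \<le> T"
    and "\<And>u. u \<in> saturation n J \<Longrightarrow> T \<le> mdeg n u \<Longrightarrow> u \<in> J"
    and "\<And>s. r \<le> s \<Longrightarrow> s < T \<Longrightarrow> hilb_fun n (saturation n J) s < hilb_fun n J s"
proof -
  let ?K = "saturation n J"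
  have K: "?K \<subseteq> mons n"
    using mono_ideal_subset_mons[OF mono_ideal_saturation[OF J]] .
  define agree where "agree T \<longleftrightarrow> (\<forall>u\<in>?K. T \<le> mdeg n u \<longrightarrow> u \<in> J)" for T
  have "finite {u \<in> ?K. mdeg n u = r}"
    using K by (intro finite_subset[OF _ finite_mons_mdeg[of n r]]) auto
  then obtain k where k: "{u \<in> ?K. mdeg n u = r} \<subseteq> colon_pow n J k"
    using finite_subset_colon_pow[OF J] by blast
  have "agree (r + k)"
    unfolding agree_def
  proof (intro ballI impI)
    fix w assume w: "w \<in> ?K" "r + k \<le> mdeg n w"
    then obtain u where u: "u \<in> ?K" "\<forall>i. u i \<le> w i" "mdeg n u = r"
      using generated_in_deg_le_divisor[OF gen w(1), of r] by auto
    then show "w \<in> J"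
      using colon_powD[OF J, of u k w] k w K by auto
  qed
  define T where "T = (LEAST T. r \<le> T \<and> agree T)"
  have T: "r \<le> T" "agree T"
    using LeastI[of "\<lambda>T. r \<le> T \<and> agree T", OF conjI[OF le_add1 \<open>agree (r + k)\<close>]]
    by (simp_all add: T_def)
  have "hilb_fun n ?K s < hilb_fun n J s" if s: "r \<le> s" "s < T" for s
  proof -
    have "\<not> agree s"
      using not_less_Least[of s "\<lambda>T. r \<le> T \<and> agree T"] s by (simp add: T_def)
    then obtain w where w: "w \<in> ?K" "s \<le> mdeg n w" "w \<notin> J"
      unfolding agree_def by auto
    then obtain u where u: "u \<in> ?K" "\<forall>i. u i \<le> w i" "mdeg n u = s"
      using generated_in_deg_le_divisor[OF gen w(1) s(1) w(2)] by blast
    have "u \<notin> J"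
      using mono_idealD[OF J _ _ u(2)] w K by blast
    then show ?thesis
      using hilb_fun_strict_antimono[OF subset_saturation[OF J]] u K by blast
  qed
  then show ?thesis
    using that T unfolding agree_def by blast
qed

lemma generated_in_deg_le_Suc:
  assumes nzd: "var_nonzerodivisor (Suc n) I"
    and gen: "generated_in_deg_le n r K" and sub: "hyperplane_section n I \<subseteq> K"
    and agree: "\<And>u. u \<in> K \<Longrightarrow> d \<le> mdeg n u \<Longrightarrow> u \<in> hyperplane_section n I"
    and "r \<le> d"
  shows "generated_in_deg_le (Suc n) d I"
  unfolding generated_in_deg_le_def
proof (intro ballI impI)
  fix u assume u: "u \<in> I" "d < mdeg (Suc n) u"
  show "\<exists>i\<le>Suc n. 0 < u i \<and> u(i := u i - 1) \<in> I"
  proof (cases "0 < u (Suc n)")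
    case True
    then show ?thesis
      using nzd u(1) unfolding var_nonzerodivisor_def by blast
  next
    case False
    then have uJ: "u \<in> hyperplane_section n I" and deg: "mdeg n u = mdeg (Suc n) u"
      using u(1) by (simp_all add: hyperplane_section_def mdeg_Suc)
    then obtain i where i: "i \<le> n" "0 < u i" "u(i := u i - 1) \<in> K"
      using gen sub u(2) \<open>r \<le> d\<close> unfolding generated_in_deg_le_def by fastforce
    have "Suc (mdeg n (u(i := u i - 1))) = mdeg n u"
      using mdeg_fun_upd[OF i(1), of u "u i - 1"] i(2) by simp
    then have "u(i := u i - 1) \<in> I"
      using agree[OF i(3)] u(2) deg by (simp add: hyperplane_section_def)
    then show ?thesis
      using i(1,2) by (intro exI[of _ i]) simp
  qed
qed

text \<open>The inequality keeps the defects \<open>H\<^sub>I - G\<close> natural numbers; in the induction step they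
  become trailing zeros of the Gotzmann expression in one more variable.\<close>

definition gotzmann_regular :: "nat \<Rightarrow> (nat \<Rightarrow> nat) set \<Rightarrow> nat list \<Rightarrow> bool" where
  "gotzmann_regular n I bs \<longleftrightarrow> sorted_wrt (\<ge>) bs \<and>
     (\<forall>t. gotzmann_hilb bs t \<le> hilb_fun n I t) \<and>
     (\<forall>t. length bs \<le> Suc t \<longrightarrow> hilb_fun n I t = gotzmann_hilb bs t) \<and>
     generated_in_deg_le n (length bs) I"

lemma mono_ideal_eq_mons: "mono_ideal n I \<Longrightarrow> (\<lambda>_. 0) \<in> I \<Longrightarrow> I = mons n"
  using mono_ideal_subset_mons mono_idealD[of n I "\<lambda>_. 0"] by blast

lemma gotzmann_regular_one_var:
  assumes I: "mono_ideal 0 I" and S: "saturated 0 I"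
  shows "\<exists>bs. gotzmann_regular 0 I bs"
proof (cases "I = {}")
  case True
  have "std_mons 0 I t = {(\<lambda>i. if i = 0 then t else 0)}" for t
    using True by (auto simp: std_mons_def mons_def mdeg_def fun_eq_iff)
  then have "hilb_fun 0 I t = gotzmann_hilb [0] t" for t
    by (simp add: hilb_fun_std_mons gotzmann_hilb_def)
  then have "gotzmann_regular 0 I [0]"
    using True by (simp add: gotzmann_regular_def generated_in_deg_le_def)
  then show ?thesis ..
next
  case False
  then obtain u where u: "u \<in> I" by blast
  then have "u \<in> mons 0"
    using mono_ideal_subset_mons[OF I] by blast
  then have "v = u" if "v \<in> mons 0" "mdeg 0 v = u 0" for v
    using that by (auto simp: mons_def mdeg_def fun_eq_iff) (metis neq0_conv)
  then have "(\<lambda>_. 0) \<in> colon_pow 0 I (u 0)"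
    using u by (auto simp: colon_pow_def mons_def)
  then have I_eq: "I = mons 0"
    using S mono_ideal_eq_mons[OF I] unfolding saturated_def saturation_eq_Union_colon_pow by blast
  have "std_mons 0 I t = {}" for t
    by (auto simp: std_mons_def I_eq)
  then have "hilb_fun 0 I t = 0" for t
    by (simp add: hilb_fun_std_mons)
  moreover have "generated_in_deg_le 0 0 I"
    by (auto simp: generated_in_deg_le_def I_eq mons_def mdeg_def)
  ultimately have "gotzmann_regular 0 I []"
    by (simp add: gotzmann_regular_def gotzmann_hilb_def)
  then show ?thesis ..
qed

lemma gotzmann_regular_Suc:
  assumes IH: "\<And>K. mono_ideal n K \<Longrightarrow> borel n K \<Longrightarrow> saturated n K \<Longrightarrow> \<exists>bs. gotzmann_regular n K bs"
    and I: "mono_ideal (Suc n) I" and B: "borel (Suc n) I" and S: "saturated (Suc n) I"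
  shows "\<exists>bs. gotzmann_regular (Suc n) I bs"
proof -
  define J where "J = hyperplane_section n I"
  define K where "K = saturation n J"
  have J: "mono_ideal n J" "borel n J"
    unfolding J_def using mono_ideal_hyperplane_section[OF I] borel_hyperplane_section[OF B] .
  have "mono_ideal n K" "borel n K" "saturated n K"
    unfolding K_def using mono_ideal_saturation[OF J(1)] borel_saturation[OF J(2)]
      saturated_saturation[OF J(1)] .
  then obtain bs where bs: "gotzmann_regular n K bs"
    using IH by blast
  then have gen: "generated_in_deg_le n (length bs) K"
    by (simp add: gotzmann_regular_def)
  obtain T where T: "length bs \<le> T" "\<And>u. u \<in> K \<Longrightarrow> T \<le> mdeg n u \<Longrightarrow> u \<in> J"
    "\<And>s. length bs \<le> s \<Longrightarrow> s < T \<Longrightarrow> hilb_fun n K s < hilb_fun n J s"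
    using saturation_gap[OF J(1) gen[unfolded K_def]] unfolding K_def by metis
  have JK: "J \<subseteq> K"
    unfolding K_def by (rule subset_saturation[OF J(1)])
  have le: "gotzmann_hilb bs s \<le> hilb_fun n J s" for s
    using bs hilb_fun_antimono[OF JK, of n s] by (auto simp: gotzmann_regular_def intro: le_trans)
  have gap: "gotzmann_hilb bs s < hilb_fun n J s" if "length bs \<le> s" "s < T" for s
    using bs T(3)[OF that] that(1) by (simp add: gotzmann_regular_def)
  have eq: "hilb_fun n J s = gotzmann_hilb bs s" if "T \<le> s" for s
    using bs hilb_fun_eqI[OF JK T(2)] that T(1) by (simp add: gotzmann_regular_def)
  define c where "c = (\<Sum>s<T. hilb_fun n J s - gotzmann_hilb bs s)"
  note lift = running_sum_gotzmann_hilb[of bs "hilb_fun n J" T, OF le gap eq, folded c_def]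
  have cumulative: "hilb_fun (Suc n) I t = (\<Sum>s\<le>t. hilb_fun n J s)" for t
    unfolding J_def by (rule hilb_fun_cumulative[OF I var_nonzerodivisor_saturated_borel[OF I B S]])
  have "sorted_wrt (\<ge>) (replicate c (0::nat))"
    by (induction c) auto
  then have "sorted_wrt (\<ge>) (map Suc bs @ replicate c 0)"
    using bs by (auto simp: gotzmann_regular_def sorted_wrt_append sorted_wrt_map)
  moreover have "generated_in_deg_le (Suc n) (length bs + c) I"
    using generated_in_deg_le_Suc[OF var_nonzerodivisor_saturated_borel[OF I B S] gen JK[unfolded J_def]]
      T(2) lift(1) unfolding J_def by fastforce
  ultimately have "gotzmann_regular (Suc n) I (map Suc bs @ replicate c 0)"
    using lift(2,3) unfolding gotzmann_regular_def cumulative by simp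
  then show ?thesis ..
qed

lemma saturated_borel_gotzmann_regular:
  "mono_ideal n I \<Longrightarrow> borel n I \<Longrightarrow> saturated n I \<Longrightarrow> \<exists>bs. gotzmann_regular n I bs"
proof (induction n arbitrary: I)
  case 0
  then show ?case using gotzmann_regular_one_var by blast
next
  case (Suc n)
  then show ?case using gotzmann_regular_Suc by blast
qed

theorem lemma5p9:
  fixes n :: nat and I :: "(nat \<Rightarrow> nat) set"
  assumes "mono_ideal n I" and "proper_ideal n I" and "saturated n I" and "borel n I"
  shows "\<exists>j::nat. hilb_poly (Suc n) (ext_ideal n I) = (sigma_poly ^^ j) (lam_poly (hilb_poly n I))"
proof -
  obtain bs where bs: "gotzmann_regular n I bs"
    using saturated_borel_gotzmann_regular assms by blast
  then have sorted: "sorted_wrt (\<ge>) bs"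
    and le: "\<And>t. gotzmann_hilb bs t \<le> hilb_fun n I t"
    and eq: "\<And>t. length bs \<le> Suc t \<Longrightarrow> hilb_fun n I t = gotzmann_hilb bs t"
    by (simp_all add: gotzmann_regular_def)
  define j where "j = (\<Sum>s<length bs. hilb_fun n I s - gotzmann_hilb bs s)"
  note lift = running_sum_gotzmann_hilb[of bs "hilb_fun n I" "length bs", OF le _ eq, folded j_def]
  have "hilb_fun (Suc n) (ext_ideal n I) t = (\<Sum>s\<le>t. hilb_fun n I s)" for t
    using hilb_fun_cumulative[OF mono_ideal_ext_ideal
        var_nonzerodivisor_ext_ideal[OF mono_ideal_subset_mons[OF assms(1)]]]
    by (simp add: hyperplane_section_ext_ideal[OF assms(1)])
  then have "hilb_poly (Suc n) (ext_ideal n I) = gotzmann_poly (map Suc bs @ replicate j 0)"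
    using lift(3) by (intro hilb_poly_eq_gotzmann_poly) simp
  also have "\<dots> = (sigma_poly ^^ j) (lam_poly (hilb_poly n I))"
    using hilb_poly_eq_gotzmann_poly[OF eq]
    by (simp add: gotzmann_poly_append_zeros lam_poly_gotzmann_poly[OF sorted] sigma_poly_funpow)
  finally show ?thesis ..
qed

end
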